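(* Let $\Sigma$ be a normal rule set and $D$ a database, let $P$ be a prioritization of $\Sigma$ and $w$ a weight assignment on $\Sigma$. For each preference $\preceq\,\in\{\subseteq_P,\le,\le_P,\le_w\}$, every repair of $\Sigma$ w.r.t. $\preceq$ and $D$ is a repair of $\Sigma$ w.r.t. $\subseteq$ (set inclusion) and $D$.
   Context: A database is a finite set of atoms whose arguments are constants. A normal (existential) rule is a sentence $\forall\mathbf{x}\forall\mathbf{y}\,(\varphi(\mathbf{x},\mathbf{y})\rightarrow\exists\mathbf{z}\,\psi(\mathbf{x},\mathbf{z}))$ where $\varphi$ is a conjunction of literals (atoms or negated atoms), $\psi$ is a conjunction of atoms or $\bot$ (a constraint), and every universally quantified variable occurs in a positive conjunct of $\varphi$; a normal rule set is a finite set of such rules. Stable models of $D\cup\Sigma$ are the Gelfond–Lifschitz stable models of the normal logic program $D\cup\mathsf{sk}(\Sigma)$, where $\mathsf{sk}$ replaces each existential variable $z$ of a rule $r$ by $f^r_z(\mathbf{x})$ with a fresh function symbol and $\neg$ by default negation (constraints exclude models satisfying their bodies). For a preorder $\preceq$ on the power set of $\Sigma$, write $S\prec S'$ if $S\preceq S'$ and $S'\not\preceq S$; a subset $S\subseteq\Sigma$ is a repair w.r.t. $\preceq$ and $D$ if $D\cup S$ has a stable model and for every $S'\subseteq\Sigma$ with $S\prec S'$, $D\cup S'$ has no stable model. Preferences: $S\le S'$ iff $|S|\le|S'|$. A prioritization of $\Sigma$ is a tuple $P=\langle P_1,\dots,P_n\rangle$ where $\{P_1,\dots,P_n\}$ is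 a partition of $\Sigma$; $S\subseteq_P S'$ iff $S\cap P_i=S'\cap P_i$ for all $i$, or there is $i$ with $S\cap P_i\subsetneq S'\cap P_i$ and $S\cap P_j=S'\cap P_j$ for all $j<i$; $S\le_P S'$ iff $|S\cap P_i|=|S'\cap P_i|$ for all $i$, or there is $i$ with $|S\cap P_i|<|S'\cap P_i|$ and $|S\cap P_j|=|S'\cap P_j|$ for all $j<i$. A weight assignment is a function $w:\Sigma\to\mathbb{N}$, and $S\le_w S'$ iff $\sum_{r\in S}w(r)\le\sum_{r\in S'}w(r)$.
   Formalization: The weight assignment w is positive, with w(r) > 0 for every rule r in $\Sigma$, so w maps $\Sigma$ into the positive integers instead of $\mathbb{N}$. The statement above fails without it. *)

theory Defs
  imports Main
begin

datatype ('c,'v) rterm = Var 'v | Cst 'c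

type_synonym ('p,'c,'v) ratom = "'p \<times> ('c,'v) rterm list"

(* a rule: positive body literals, negated body atoms, head (Some atoms) or bottom (None) *)
datatype ('p,'c,'v) nrule =
  NRule (pos: "('p,'c,'v) ratom list") (neg: "('p,'c,'v) ratom list")
        (head: "('p,'c,'v) ratom list option")

fun tvars :: "('c,'v) rterm \<Rightarrow> 'v set" where
  "tvars (Var v) = {v}"
| "tvars (Cst c) = {}"

definition avars :: "('p,'c,'v) ratom \<Rightarrow> 'v set" where
  "avars a = \<Union> (tvars ` set (snd a))"

definition lvars :: "('p,'c,'v) ratom list \<Rightarrow> 'v set" where
  "lvars as = \<Union> (avars ` set as)"

definition body_vars :: "('p,'c,'v) nrule \<Rightarrow> 'v set" where
  "body_vars r = lvars (pos r) \<union> lvars (neg r)"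

definition head_vars :: "('p,'c,'v) nrule \<Rightarrow> 'v set" where
  "head_vars r = (case head r of None \<Rightarrow> {} | Some h \<Rightarrow> lvars h)"

definition frontier :: "('p,'c,'v) nrule \<Rightarrow> 'v set" where
  "frontier r = body_vars r \<inter> head_vars r"

(* normal rule: every universal variable occurs in a positive body atom;
   the head is a nonempty conjunction of atoms or bottom *)
definition normal_rule :: "('p,'c,'v) nrule \<Rightarrow> bool" where
  "normal_rule r \<longleftrightarrow> lvars (neg r) \<subseteq> lvars (pos r) \<and> head r \<noteq> Some []"

definition normal_rule_set :: "('p,'c,'v) nrule set \<Rightarrow> bool" where
  "normal_rule_set \<Sigma> \<longleftrightarrow> finite \<Sigma> \<and> (\<forall>r\<in>\<Sigma>. normal_rule r)"

definition database :: "('p \<times> 'c list) set \<Rightarrow> bool" where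
  "database D \<longleftrightarrow> finite D"

(* ground terms over constants and Skolem function symbols f^r_z *)
datatype ('c,'r,'v) gterm = GConst 'c | GSk 'r 'v "('c,'r,'v) gterm list"

type_synonym ('p,'c,'v) gatom = "'p \<times> ('c, ('p,'c,'v) nrule, 'v) gterm list"

(* ground instance of a term of rule r (Skolemised) under a substitution sigma:
   an existential variable z becomes f^r_z(x) with x the frontier variables *)
fun inst_term :: "('p,'c,'v::linorder) nrule \<Rightarrow> ('v \<Rightarrow> ('c, ('p,'c,'v) nrule, 'v) gterm)
     \<Rightarrow> ('c,'v) rterm \<Rightarrow> ('c, ('p,'c,'v) nrule, 'v) gterm" where
  "inst_term r \<sigma> (Var v) =
     (if v \<in> body_vars r then \<sigma> v
      else GSk r v (map \<sigma> (sorted_list_of_set (frontier r))))"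
| "inst_term r \<sigma> (Cst c) = GConst c"

definition inst_atom :: "('p,'c,'v::linorder) nrule \<Rightarrow> ('v \<Rightarrow> ('c, ('p,'c,'v) nrule, 'v) gterm)
     \<Rightarrow> ('p,'c,'v) ratom \<Rightarrow> ('p,'c,'v) gatom" where
  "inst_atom r \<sigma> a = (fst a, map (inst_term r \<sigma>) (snd a))"

definition inst_set :: "('p,'c,'v::linorder) nrule \<Rightarrow> ('v \<Rightarrow> ('c, ('p,'c,'v) nrule, 'v) gterm)
     \<Rightarrow> ('p,'c,'v) ratom list \<Rightarrow> ('p,'c,'v) gatom set" where
  "inst_set r \<sigma> as = inst_atom r \<sigma> ` set as"

definition db_atom :: "'p \<times> 'c list \<Rightarrow> ('p,'c,'v) gatom" where
  "db_atom a = (fst a, map GConst (snd a))"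

(* I is closed under the Gelfond-Lifschitz reduct of D \<union> sk(S) w.r.t. M *)
definition reduct_closed :: "('p \<times> 'c list) set \<Rightarrow> ('p,'c,'v::linorder) nrule set
     \<Rightarrow> ('p,'c,'v) gatom set \<Rightarrow> ('p,'c,'v) gatom set \<Rightarrow> bool" where
  "reduct_closed D S M I \<longleftrightarrow> db_atom ` D \<subseteq> I \<and>
     (\<forall>r\<in>S. \<forall>\<sigma> h. head r = Some h \<longrightarrow> inst_set r \<sigma> (neg r) \<inter> M = {}
        \<longrightarrow> inst_set r \<sigma> (pos r) \<subseteq> I \<longrightarrow> inst_set r \<sigma> h \<subseteq> I)"

(* least model of the (constraint-free part of the) reduct *)
definition reduct_least_model :: "('p \<times> 'c list) set \<Rightarrow> ('p,'c,'v::linorder) nrule set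
     \<Rightarrow> ('p,'c,'v) gatom set \<Rightarrow> ('p,'c,'v) gatom set" where
  "reduct_least_model D S M = \<Inter> {I. reduct_closed D S M I}"

definition stable_model :: "('p \<times> 'c list) set \<Rightarrow> ('p,'c,'v::linorder) nrule set
     \<Rightarrow> ('p,'c,'v) gatom set \<Rightarrow> bool" where
  "stable_model D S M \<longleftrightarrow> M = reduct_least_model D S M \<and>
     (\<forall>r\<in>S. \<forall>\<sigma>. head r = None \<longrightarrow>
        \<not> (inst_set r \<sigma> (pos r) \<subseteq> M \<and> inst_set r \<sigma> (neg r) \<inter> M = {}))"

definition has_stable_model :: "('p \<times> 'c list) set \<Rightarrow> ('p,'c,'v::linorder) nrule set \<Rightarrow> bool" where
  "has_stable_model D S \<longleftrightarrow> (\<exists>M. stable_model D S M)"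

definition strict_pref :: "('a set \<Rightarrow> 'a set \<Rightarrow> bool) \<Rightarrow> 'a set \<Rightarrow> 'a set \<Rightarrow> bool" where
  "strict_pref pref S S' \<longleftrightarrow> pref S S' \<and> \<not> pref S' S"

definition repair :: "(('p,'c,'v::linorder) nrule set \<Rightarrow> ('p,'c,'v) nrule set \<Rightarrow> bool)
     \<Rightarrow> ('p,'c,'v) nrule set \<Rightarrow> ('p \<times> 'c list) set \<Rightarrow> ('p,'c,'v) nrule set \<Rightarrow> bool" where
  "repair pref \<Sigma> D S \<longleftrightarrow> S \<subseteq> \<Sigma> \<and> has_stable_model D S \<and>
     (\<forall>S'. S' \<subseteq> \<Sigma> \<longrightarrow> strict_pref pref S S' \<longrightarrow> \<not> has_stable_model D S')"

definition card_le :: "'a set \<Rightarrow> 'a set \<Rightarrow> bool" where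
  "card_le S S' \<longleftrightarrow> card S \<le> card S'"

(* prioritisation <P_1,...,P_n>, as a list indexed 0..n-1, whose parts partition Sigma *)
definition prioritization :: "'a set \<Rightarrow> 'a set list \<Rightarrow> bool" where
  "prioritization \<Sigma> P \<longleftrightarrow> (\<forall>i<length P. P ! i \<noteq> {}) \<and>
     (\<forall>i<length P. \<forall>j<length P. i \<noteq> j \<longrightarrow> P ! i \<inter> P ! j = {}) \<and>
     \<Union> (set P) = \<Sigma>"

definition prio_subset :: "'a set list \<Rightarrow> 'a set \<Rightarrow> 'a set \<Rightarrow> bool" where
  "prio_subset P S S' \<longleftrightarrow> (\<forall>i<length P. S \<inter> P ! i = S' \<inter> P ! i) \<or>
     (\<exists>i<length P. S \<inter> P ! i \<subset> S' \<inter> P ! i \<and> (\<forall>j<i. S \<inter> P ! j = S' \<inter> P ! j))"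

definition prio_card :: "'a set list \<Rightarrow> 'a set \<Rightarrow> 'a set \<Rightarrow> bool" where
  "prio_card P S S' \<longleftrightarrow> (\<forall>i<length P. card (S \<inter> P ! i) = card (S' \<inter> P ! i)) \<or>
     (\<exists>i<length P. card (S \<inter> P ! i) < card (S' \<inter> P ! i) \<and>
        (\<forall>j<i. card (S \<inter> P ! j) = card (S' \<inter> P ! j)))"

definition weight_le :: "('a \<Rightarrow> nat) \<Rightarrow> 'a set \<Rightarrow> 'a set \<Rightarrow> bool" where
  "weight_le w S S' \<longleftrightarrow> sum w S \<le> sum w S'"

end

theory Submission
  imports Defs
begin

text \<open>Each of the four preferences strictly prefers a proper superset within \<open>\<Sigma>\<close>: for \<open>\<le>\<close>
  by finiteness, for \<open>\<le>\<^sub>w\<close> because all weights are positive, and for \<open>\<subseteq>\<^sub>P\<close> and \<open>\<le>\<^sub>P\<close> by looking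
  at the first part of \<open>P\<close> on which the two sets differ. Hence a strict \<open>\<subseteq>\<close>-improvement of a
  repair is a strict improvement for the preference as well, so it has no stable model.\<close>

lemma repair_subset_if_psubset_strict_pref:
  assumes "repair pref \<Sigma> D S"
    and "\<And>S'. S \<subset> S' \<Longrightarrow> S' \<subseteq> \<Sigma> \<Longrightarrow> strict_pref pref S S'"
  shows "repair (\<subseteq>) \<Sigma> D S"
  using assms unfolding repair_def strict_pref_def by blast

lemma psubset_first_differing_part:
  assumes "S \<subset> S'" "S' \<subseteq> \<Union> (set P)"
  obtains i where "i < length P" "S \<inter> P ! i \<subset> S' \<inter> P ! i"
    "\<forall>j<i. S \<inter> P ! j = S' \<inter> P ! j"
proof -
  let ?differs = "\<lambda>k. k < length P \<and> S \<inter> P ! k \<noteq> S' \<inter> P ! k"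
  obtain x where x: "x \<in> S'" "x \<notin> S" using assms(1) by blast
  then obtain k where "k < length P" "x \<in> P ! k"
    using assms(2) by (metis UnionE in_set_conv_nth subsetD)
  with x have "?differs k" by blast
  define i where "i = (LEAST k. ?differs k)"
  have i: "?differs i"
    unfolding i_def by (rule LeastI) fact
  have "S \<inter> P ! j = S' \<inter> P ! j" if "j < i" for j
    using not_less_Least[OF that[unfolded i_def]] that i by auto
  moreover have "S \<inter> P ! i \<subset> S' \<inter> P ! i" using i assms(1) by blast
  ultimately show ?thesis using that i by blast
qed

lemma strict_pref_prio_subset_if_psubset:
  assumes "S \<subset> S'" "S' \<subseteq> \<Union> (set P)"
  shows "strict_pref (prio_subset P) S S'"
proof -
  obtain i where "i < length P" "S \<inter> P ! i \<subset> S' \<inter> P ! i" "\<forall>j<i. S \<inter> P ! j = S' \<inter> P ! j"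
    using psubset_first_differing_part[OF assms] .
  moreover have "\<not> S' \<inter> P ! k \<subset> S \<inter> P ! k" for k using assms(1) by blast
  ultimately show ?thesis unfolding strict_pref_def prio_subset_def by (metis less_irrefl)
qed

lemma strict_pref_card_le_if_psubset:
  assumes "S \<subset> S'" "finite S'"
  shows "strict_pref card_le S S'"
  using psubset_card_mono[OF assms(2,1)] unfolding strict_pref_def card_le_def by simp

lemma strict_pref_prio_card_if_psubset:
  assumes "S \<subset> S'" "S' \<subseteq> \<Union> (set P)" "finite S'"
  shows "strict_pref (prio_card P) S S'"
proof -
  obtain i where i: "i < length P" "S \<inter> P ! i \<subset> S' \<inter> P ! i"
    and before: "\<forall>j<i. S \<inter> P ! j = S' \<inter> P ! j"
    using psubset_first_differing_part[OF assms(1,2)] .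
  have less: "card (S \<inter> P ! i) < card (S' \<inter> P ! i)"
    using i(2) assms(3) by (simp add: psubset_card_mono)
  have not_greater: "\<not> card (S' \<inter> P ! k) < card (S \<inter> P ! k)" for k
    using assms(1,3) by (intro leD card_mono) auto
  have "prio_card P S S'"
    unfolding prio_card_def using i(1) less before by (intro disjI2 exI[of _ i]) simp
  moreover have "\<not> prio_card P S' S"
    unfolding prio_card_def using i(1) less not_greater by (metis less_irrefl)
  ultimately show ?thesis unfolding strict_pref_def by simp
qed

lemma strict_pref_weight_le_if_psubset:
  fixes w :: "'a \<Rightarrow> nat"
  assumes "S \<subset> S'" "finite S'" "\<forall>r\<in>S'. w r > 0"
  shows "strict_pref (weight_le w) S S'"
proof -
  obtain x where "x \<in> S' - S" using assms(1) by blast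
  then have "sum w S < sum w S'"
    using assms by (intro sum_strict_mono2) auto
  then show ?thesis unfolding strict_pref_def weight_le_def by simp
qed

theorem theorem1:
  fixes \<Sigma> :: "('p,'c,'v::linorder) nrule set"
    and D :: "('p \<times> 'c list) set"
    and P :: "('p,'c,'v) nrule set list"
    and w :: "('p,'c,'v) nrule \<Rightarrow> nat"
    and pref :: "('p,'c,'v) nrule set \<Rightarrow> ('p,'c,'v) nrule set \<Rightarrow> bool"
    and S :: "('p,'c,'v) nrule set"
  assumes "normal_rule_set \<Sigma>"
    and "database D"
    and "prioritization \<Sigma> P"
    and "\<forall>r\<in>\<Sigma>. w r > 0"
    and "pref \<in> {prio_subset P, card_le, prio_card P, weight_le w}"
    and "repair pref \<Sigma> D S"
  shows "repair (\<subseteq>) \<Sigma> D S"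
  using assms(6)
proof (rule repair_subset_if_psubset_strict_pref)
  fix S' assume S': "S \<subset> S'" "S' \<subseteq> \<Sigma>"
  have "finite S'" using assms(1) S'(2) unfolding normal_rule_set_def by (metis finite_subset)
  moreover have "S' \<subseteq> \<Union> (set P)" using assms(3) S'(2) unfolding prioritization_def by blast
  moreover have "\<forall>r\<in>S'. w r > 0" using assms(4) S'(2) by blast
  ultimately show "strict_pref pref S S'"
    using assms(5) strict_pref_prio_subset_if_psubset[OF S'(1)] strict_pref_card_le_if_psubset[OF S'(1)]
      strict_pref_prio_card_if_psubset[OF S'(1)] strict_pref_weight_le_if_psubset[OF S'(1)]
    by (elim insertE emptyE) simp_all
qed

end
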